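(* Let $k\ge 0$ be an integer and let $G$ be a finite graph (parallel edges allowed, no loops). Let $u_0\in V(G)$ and let $u_1,u_2$ be two distinct neighbors of $u_0$. Let $H$ be the graph obtained from $G$ by deleting all edges with one end $u_0$ and the other end $u_1$ or $u_2$, and let $\kappa$ be a $k$-edge-coloring of $H$. For $i=1,2$ let $m_i$ be the number of edges of $G$ with ends $u_0$ and $u_i$, and for $i=0,1,2$ let $S_i$ be the set of colors $\kappa(f)$ over all edges $f$ of $H$ incident with $u_i$. If $m_1+|S_0\cup S_1|\le k$, $m_2+|S_0\cup S_2|\le k$ and $m_1+m_2+|S_0\cup(S_1\cap S_2)|\le k$, then $\kappa$ can be extended to a $k$-edge-coloring of $G$.
   Context: A $k$-edge-coloring of a graph is a map $\kappa:E\to\{1,\dots,k\}$ such that $\kappa(e)\neq\kappa(f)$ for any two distinct edges $e,f$ sharing at least one end (parallel edges sharing both ends must receive different colors). *)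

theory Defs
  imports Main
begin

definition multigraph :: "'v set \<Rightarrow> 'e set \<Rightarrow> ('e \<Rightarrow> 'v set) \<Rightarrow> bool" where
  "multigraph V E ends \<longleftrightarrow> finite V \<and> finite E \<and>
     (\<forall>e\<in>E. ends e \<subseteq> V \<and> card (ends e) = 2)"

definition edge_coloring :: "nat \<Rightarrow> 'e set \<Rightarrow> ('e \<Rightarrow> 'v set) \<Rightarrow> ('e \<Rightarrow> nat) \<Rightarrow> bool" where
  "edge_coloring k E ends \<kappa> \<longleftrightarrow>
     (\<forall>e\<in>E. \<kappa> e \<in> {1..k}) \<and>
     (\<forall>e\<in>E. \<forall>f\<in>E. e \<noteq> f \<and> ends e \<inter> ends f \<noteq> {} \<longrightarrow> \<kappa> e \<noteq> \<kappa> f)"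

end

theory Submission
  imports Defs
begin

text \<open>The new edges between \<open>u\<^sub>0\<close> and \<open>u\<^sub>1\<close> or \<open>u\<^sub>2\<close> pairwise share \<open>u\<^sub>0\<close>, so they need
  pairwise distinct colours; an edge to \<open>u\<^sub>i\<close> may use exactly the colours of
  \<open>F\<^sub>i = {1..k} - (S\<^sub>0 \<union> S\<^sub>i)\<close>. Hence it suffices to choose disjoint sets of \<open>m\<^sub>1\<close> colours
  in \<open>F\<^sub>1\<close> and \<open>m\<^sub>2\<close> colours in \<open>F\<^sub>2\<close>, and by Hall's condition for two sets this is possible
  iff \<open>m\<^sub>i \<le> |F\<^sub>i|\<close> and \<open>m\<^sub>1 + m\<^sub>2 \<le> |F\<^sub>1 \<union> F\<^sub>2|\<close>, where
  \<open>F\<^sub>1 \<union> F\<^sub>2 = {1..k} - (S\<^sub>0 \<union> (S\<^sub>1 \<inter> S\<^sub>2))\<close>.\<close>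

lemma obtain_disjoint_subsets_with_card:
  assumes "finite F1" "finite F2" "m1 \<le> card F1" "m2 \<le> card F2" "m1 + m2 \<le> card (F1 \<union> F2)"
  obtains X1 X2 where "X1 \<subseteq> F1" "X2 \<subseteq> F2" "X1 \<inter> X2 = {}" "card X1 = m1" "card X2 = m2"
proof (cases "m1 \<le> card (F1 - F2)")
  case True
  then obtain X1 where "X1 \<subseteq> F1 - F2" "card X1 = m1" by (meson obtain_subset_with_card_n)
  moreover obtain X2 where "X2 \<subseteq> F2" "card X2 = m2" using assms(4) by (meson obtain_subset_with_card_n)
  ultimately show ?thesis using that by blast
next
  case False
  \<comment> \<open>use all of \<open>F\<^sub>1 - F\<^sub>2\<close> and top it up with a set \<open>Y\<close> of common colours\<close>
  have "card F1 = card (F1 - F2) + card (F1 \<inter> F2)"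
    using assms(1) card_Diff_subset_Int[of F1 F2] card_mono[of F1 "F1 \<inter> F2"] by simp
  then obtain Y where Y: "Y \<subseteq> F1 \<inter> F2" "card Y = m1 - card (F1 - F2)"
    using assms(3) by (metis add_diff_cancel_left' diff_le_mono obtain_subset_with_card_n)
  have fin_Y: "finite Y" using Y assms(2) by (meson finite_Int finite_subset)
  have "card (F1 \<union> F2) = card (F1 - F2) + card F2"
    using assms(1,2) by (metis Un_Diff_cancel2 card_Un_disjoint finite_Diff Diff_disjoint inf_commute)
  moreover have "card (F2 - Y) = card F2 - card Y" using Y fin_Y by (meson card_Diff_subset le_infE)
  ultimately have "m2 \<le> card (F2 - Y)" using Y assms(5) False by linarith
  then obtain X2 where X2: "X2 \<subseteq> F2 - Y" "card X2 = m2" by (meson obtain_subset_with_card_n)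
  have "card ((F1 - F2) \<union> Y) = card (F1 - F2) + card Y"
    using fin_Y assms(1) Y by (intro card_Un_disjoint) auto
  then have "card ((F1 - F2) \<union> Y) = m1" using Y False by linarith
  then show ?thesis using that[of "(F1 - F2) \<union> Y" X2] X2 Y by auto
qed

lemma obtain_inj_on_Un_into:
  assumes "finite A1" "finite A2" "A1 \<inter> A2 = {}" "finite F1" "finite F2"
    and "card A1 \<le> card F1" "card A2 \<le> card F2" "card A1 + card A2 \<le> card (F1 \<union> F2)"
  obtains g where "inj_on g (A1 \<union> A2)" "g ` A1 \<subseteq> F1" "g ` A2 \<subseteq> F2"
proof -
  obtain X1 X2 where X: "X1 \<subseteq> F1" "X2 \<subseteq> F2" "X1 \<inter> X2 = {}" "card X1 = card A1" "card X2 = card A2"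
    using obtain_disjoint_subsets_with_card assms(4-8) by metis
  have "finite X1" "finite X2" using X assms(4,5) by (auto intro: finite_subset)
  then obtain g1 g2 where g1: "bij_betw g1 A1 X1" and g2: "bij_betw g2 A2 X2"
    using assms(1,2) X(4,5) by (metis finite_same_card_bij)
  define g where "g x = (if x \<in> A1 then g1 x else g2 x)" for x
  have "g ` A1 = X1" "g ` A2 = X2"
    using g1 g2 assms(3) unfolding g_def bij_betw_def by (auto simp: image_def)
  moreover have "inj_on g A1" "inj_on g A2"
    using g1 g2 assms(3) unfolding g_def bij_betw_def inj_on_def by auto
  moreover have "A1 - A2 = A1" "A2 - A1 = A2" using assms(3) by auto
  ultimately have "inj_on g (A1 \<union> A2)" using X(3) by (simp add: inj_on_Un)
  then show ?thesis using that X \<open>g ` A1 = X1\<close> \<open>g ` A2 = X2\<close> by blast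
qed

lemma edge_coloring_extend_rainbow:
  assumes col: "edge_coloring k H ends \<kappa>"
    and inj: "inj_on \<kappa>' (E - H)" and range: "\<kappa>' ` (E - H) \<subseteq> {1..k}"
    and agree: "\<forall>e\<in>H. \<kappa>' e = \<kappa> e"
    and avoid: "\<forall>e\<in>E - H. \<forall>f\<in>H. ends e \<inter> ends f \<noteq> {} \<longrightarrow> \<kappa>' e \<noteq> \<kappa> f"
  shows "edge_coloring k E ends \<kappa>'"
  unfolding edge_coloring_def
proof (intro conjI ballI impI)
  fix e assume "e \<in> E"
  then show "\<kappa>' e \<in> {1..k}" using col range agree unfolding edge_coloring_def by (cases "e \<in> H") auto
next
  fix e f assume "e \<in> E" "f \<in> E" and ef: "e \<noteq> f \<and> ends e \<inter> ends f \<noteq> {}"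
  then consider "e \<in> H" "f \<in> H" | "e \<in> E - H" "f \<in> E - H" | "e \<in> E - H" "f \<in> H" | "e \<in> H" "f \<in> E - H"
    by blast
  then show "\<kappa>' e \<noteq> \<kappa>' f"
  proof cases
    case 1 then show ?thesis using col agree ef unfolding edge_coloring_def by auto
  next
    case 2 then show ?thesis using inj ef by (auto dest: inj_onD)
  next
    case 3 then show ?thesis using avoid agree ef by auto
  next
    case 4 then show ?thesis using avoid agree ef by (metis Int_commute)
  qed
qed

lemma card_free_colours:
  fixes k :: nat and S0 S1 S2 :: "nat set"
  defines "F1 \<equiv> {1..k} - (S0 \<union> S1)" and "F2 \<equiv> {1..k} - (S0 \<union> S2)"
  assumes "S0 \<subseteq> {1..k}" "S1 \<subseteq> {1..k}" "S2 \<subseteq> {1..k}"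
    and "m1 + card (S0 \<union> S1) \<le> k" "m2 + card (S0 \<union> S2) \<le> k"
    and "m1 + m2 + card (S0 \<union> (S1 \<inter> S2)) \<le> k"
  shows "m1 \<le> card F1" "m2 \<le> card F2" "m1 + m2 \<le> card (F1 \<union> F2)"
proof -
  have card_free: "card ({1..k} - T) = k - card T" if "T \<subseteq> {1..k}" for T :: "nat set"
    using that by (simp add: card_Diff_subset finite_subset)
  have "S0 \<union> S1 \<subseteq> {1..k}" "S0 \<union> S2 \<subseteq> {1..k}" "S0 \<union> (S1 \<inter> S2) \<subseteq> {1..k}"
    using assms(3-5) by auto
  note card_F = this[THEN card_free]
  have "F1 \<union> F2 = {1..k} - (S0 \<union> (S1 \<inter> S2))" unfolding F1_def F2_def by blast
  then show "m1 \<le> card F1" "m2 \<le> card F2" "m1 + m2 \<le> card (F1 \<union> F2)"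
    using assms(6-8) card_F unfolding F1_def F2_def by auto
qed

theorem lemma4:
  fixes k :: nat and V :: "'v set" and E :: "'e set" and ends :: "'e \<Rightarrow> 'v set"
    and u0 u1 u2 :: 'v and \<kappa> :: "'e \<Rightarrow> nat"
  assumes G: "multigraph V E ends"
    and u0: "u0 \<in> V"
    and nb1: "\<exists>e\<in>E. ends e = {u0, u1}"
    and nb2: "\<exists>e\<in>E. ends e = {u0, u2}"
    and dist: "u1 \<noteq> u2"
    and col: "edge_coloring k {e\<in>E. ends e \<noteq> {u0, u1} \<and> ends e \<noteq> {u0, u2}} ends \<kappa>"
    and c1: "card {e\<in>E. ends e = {u0, u1}}
             + card (\<kappa> ` {f\<in>E. ends f \<noteq> {u0, u1} \<and> ends f \<noteq> {u0, u2} \<and> u0 \<in> ends f}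
                   \<union> \<kappa> ` {f\<in>E. ends f \<noteq> {u0, u1} \<and> ends f \<noteq> {u0, u2} \<and> u1 \<in> ends f}) \<le> k"
    and c2: "card {e\<in>E. ends e = {u0, u2}}
             + card (\<kappa> ` {f\<in>E. ends f \<noteq> {u0, u1} \<and> ends f \<noteq> {u0, u2} \<and> u0 \<in> ends f}
                   \<union> \<kappa> ` {f\<in>E. ends f \<noteq> {u0, u1} \<and> ends f \<noteq> {u0, u2} \<and> u2 \<in> ends f}) \<le> k"
    and c3: "card {e\<in>E. ends e = {u0, u1}} + card {e\<in>E. ends e = {u0, u2}}
             + card (\<kappa> ` {f\<in>E. ends f \<noteq> {u0, u1} \<and> ends f \<noteq> {u0, u2} \<and> u0 \<in> ends f}
                   \<union> (\<kappa> ` {f\<in>E. ends f \<noteq> {u0, u1} \<and> ends f \<noteq> {u0, u2} \<and> u1 \<in> ends f}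
                      \<inter> \<kappa> ` {f\<in>E. ends f \<noteq> {u0, u1} \<and> ends f \<noteq> {u0, u2} \<and> u2 \<in> ends f})) \<le> k"
  shows "\<exists>\<kappa>'. edge_coloring k E ends \<kappa>' \<and>
           (\<forall>e\<in>{e\<in>E. ends e \<noteq> {u0, u1} \<and> ends e \<noteq> {u0, u2}}. \<kappa>' e = \<kappa> e)"
proof -
  define H where "H = {e\<in>E. ends e \<noteq> {u0, u1} \<and> ends e \<noteq> {u0, u2}}"
  define E1 where "E1 = {e\<in>E. ends e = {u0, u1}}"
  define E2 where "E2 = {e\<in>E. ends e = {u0, u2}}"
  define S where "S u = \<kappa> ` {f\<in>H. u \<in> ends f}" for u
  define F1 where "F1 = {1..k} - (S u0 \<union> S u1)"
  define F2 where "F2 = {1..k} - (S u0 \<union> S u2)"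
  have S_eq: "S u = \<kappa> ` {f\<in>E. ends f \<noteq> {u0, u1} \<and> ends f \<noteq> {u0, u2} \<and> u \<in> ends f}" for u
    unfolding S_def H_def by (simp add: conj_assoc)
  have S_colours: "S u \<subseteq> {1..k}" for u
    using col unfolding S_def H_def edge_coloring_def by auto
  have "card E1 \<le> card F1" "card E2 \<le> card F2" "card E1 + card E2 \<le> card (F1 \<union> F2)"
    using card_free_colours[OF S_colours S_colours S_colours] c1 c2 c3
    unfolding E1_def E2_def F1_def F2_def S_eq[symmetric] by blast+
  moreover have "finite E" using G unfolding multigraph_def by blast
  moreover have "E1 \<inter> E2 = {}" using dist unfolding E1_def E2_def by (auto simp: doubleton_eq_iff)
  ultimately obtain g where g: "inj_on g (E1 \<union> E2)" "g ` E1 \<subseteq> F1" "g ` E2 \<subseteq> F2"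
    using obtain_inj_on_Un_into[of E1 E2 F1 F2] unfolding E1_def E2_def F1_def F2_def by auto
  define \<kappa>' where "\<kappa>' e = (if e \<in> H then \<kappa> e else g e)" for e
  have E_minus_H: "E - H = E1 \<union> E2" unfolding H_def E1_def E2_def by auto
  have "edge_coloring k E ends \<kappa>'"
  proof (rule edge_coloring_extend_rainbow[OF col[folded H_def]])
    have "inj_on g (E - H)" using g(1) E_minus_H by simp
    then show "inj_on \<kappa>' (E - H)" by (rule inj_on_cong[THEN iffD2, rotated]) (simp add: \<kappa>'_def)
    show "\<kappa>' ` (E - H) \<subseteq> {1..k}" using g E_minus_H by (auto simp: \<kappa>'_def F1_def F2_def)
    show "\<forall>e\<in>E - H. \<forall>f\<in>H. ends e \<inter> ends f \<noteq> {} \<longrightarrow> \<kappa>' e \<noteq> \<kappa> f"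
    proof (intro ballI impI)
      fix e f assume "e \<in> E - H" "f \<in> H" "ends e \<inter> ends f \<noteq> {}"
      then consider "e \<in> E1" "u0 \<in> ends f \<or> u1 \<in> ends f" | "e \<in> E2" "u0 \<in> ends f \<or> u2 \<in> ends f"
        unfolding E_minus_H E1_def E2_def by auto
      then show "\<kappa>' e \<noteq> \<kappa> f"
        using g \<open>f \<in> H\<close> E_minus_H \<open>e \<in> E - H\<close>
        by cases (auto simp: \<kappa>'_def F1_def F2_def S_def)
    qed
  qed (auto simp: H_def \<kappa>'_def)
  then show ?thesis unfolding H_def[symmetric] \<kappa>'_def by auto
qed

end
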